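(* Consider the Axelrod model with $F$ features and $q\ge2$ states on the path with vertex set $\{0,1,\dots,N\}$, started with all initial features i.i.d. uniform on $\{1,\dots,q\}$, and fix a time $t\ge0$. Let $0\le x<y<z\le N$ and $i\in\{1,\dots,F\}$, and for vertices $u,v$ let $\Omega_i(u,v)=\{X_t^i(u)=X_t^i(v)\}$. Then $$P\big(\Omega_i(x,z)\ \big|\ (\Omega_i(x,y)\cup\Omega_i(y,z))^c\big)=\frac{1}{q-1}.$$
   Context: Axelrod model with $F$ features and $q$ states on a graph: process $X_t:V\to\{1,\dots,q\}^F$, $X_t(x)=(X_t^1(x),\dots,X_t^F(x))$; for each ordered pair $(x,y)$ of adjacent vertices with $X(x)\ne X(y)$, at rate $F(x,y)/2$, where $F(x,y)=\frac1F\sum_i\mathbf 1\{X^i(x)=X^i(y)\}$, vertex $x$ copies from $y$ one feature chosen uniformly among those on which they differ. *)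

theory Defs
  imports Complex_Main
begin

text \<open>Axelrod model on the path with vertex set {0..N}, F features (indexed 1..F),
q states (1..q).  A configuration is a function eta :: nat => nat => nat,
eta v j = state of feature j at vertex v; outside the relevant index range it is 0.\<close>

type_synonym config = "nat \<Rightarrow> nat \<Rightarrow> nat"

definition configs :: "nat \<Rightarrow> nat \<Rightarrow> nat \<Rightarrow> config set" where
  "configs N F q = {eta. \<forall>v j. (v \<le> N \<and> 1 \<le> j \<and> j \<le> F \<longrightarrow> eta v j \<in> {1..q})
                              \<and> (\<not> (v \<le> N \<and> 1 \<le> j \<and> j \<le> F) \<longrightarrow> eta v j = 0)}"

definition path_pairs :: "nat \<Rightarrow> (nat \<times> nat) set" where
  "path_pairs N = {(u, v). u \<le> N \<and> v \<le> N \<and> (v = u + 1 \<or> u = v + 1)}"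

definition diff_feats :: "nat \<Rightarrow> config \<Rightarrow> nat \<Rightarrow> nat \<Rightarrow> nat set" where
  "diff_feats F eta u v = {j \<in> {1..F}. eta u j \<noteq> eta v j}"

definition similarity :: "nat \<Rightarrow> config \<Rightarrow> nat \<Rightarrow> nat \<Rightarrow> real" where
  "similarity F eta u v = real (card {j \<in> {1..F}. eta u j = eta v j}) / real F"

text \<open>Generator matrix: for each ordered adjacent pair (u,v) with differing
cultures, at rate similarity/2, u copies from v a feature chosen uniformly among
the differing ones.  Q eta xi is the rate eta -> xi for xi \<noteq> eta, and the
diagonal entry is minus the total jump rate.\<close>
definition axelrod_gen :: "nat \<Rightarrow> nat \<Rightarrow> config \<Rightarrow> config \<Rightarrow> real" where
  "axelrod_gen N F eta xi =
     (\<Sum>(u, v) \<in> path_pairs N. \<Sum>j \<in> diff_feats F eta u v.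
        (similarity F eta u v / 2) / real (card (diff_feats F eta u v)) *
        ((if eta(u := (eta u)(j := eta v j)) = xi then 1 else 0)
         - (if eta = xi then 1 else 0)))"

fun gen_pow :: "nat \<Rightarrow> nat \<Rightarrow> nat \<Rightarrow> nat \<Rightarrow> config \<Rightarrow> config \<Rightarrow> real" where
  "gen_pow N F q 0 eta xi = (if eta = xi then 1 else 0)"
| "gen_pow N F q (Suc n) eta xi =
     (\<Sum>zeta \<in> configs N F q. gen_pow N F q n eta zeta * axelrod_gen N F zeta xi)"

definition trans_prob :: "nat \<Rightarrow> nat \<Rightarrow> nat \<Rightarrow> real \<Rightarrow> config \<Rightarrow> config \<Rightarrow> real" where
  "trans_prob N F q t eta xi = (\<Sum>n. t ^ n / fact n * gen_pow N F q n eta xi)"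

text \<open>Law of X_t when the initial features are i.i.d. uniform on {1..q}
(i.e. the initial configuration is uniform on the configuration space).\<close>
definition law_at :: "nat \<Rightarrow> nat \<Rightarrow> nat \<Rightarrow> real \<Rightarrow> config \<Rightarrow> real" where
  "law_at N F q t xi =
     (\<Sum>eta \<in> configs N F q. (1 / real (card (configs N F q))) * trans_prob N F q t eta xi)"

definition prob_at :: "nat \<Rightarrow> nat \<Rightarrow> nat \<Rightarrow> real \<Rightarrow> config set \<Rightarrow> real" where
  "prob_at N F q t A = (\<Sum>xi \<in> configs N F q \<inter> A. law_at N F q t xi)"

definition cond_prob_at :: "nat \<Rightarrow> nat \<Rightarrow> nat \<Rightarrow> real \<Rightarrow> config set \<Rightarrow> config set \<Rightarrow> real" where
  "cond_prob_at N F q t A B = prob_at N F q t (A \<inter> B) / prob_at N F q t B"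

definition Omega :: "nat \<Rightarrow> nat \<Rightarrow> nat \<Rightarrow> config set" where
  "Omega i u v = {eta. eta u i = eta v i}"

end

theory Submission
  imports Defs "HOL-Library.FuncSet" "HOL-Combinatorics.Transposition"
begin

text \<open>
  Fix the feature \<open>i\<close>.  Call two configurations equivalent (\<open>same_pattern\<close>) if they
  agree in all other features and, in feature \<open>i\<close>, exactly the same edges of the path are in
  agreement.  The central claim is that the law of \<open>X\<^sub>t\<close> from the uniform start is constant on
  these classes.  Granting this, the map that exchanges two values of feature \<open>i\<close> at all vertices
  to the right of \<open>y\<close> stays inside a class and gives a \<open>(q - 1)\<close>-to-one correspondence between
  \<open>\<Omega>(x,y)\<^sup>c \<inter> \<Omega>(y,z)\<^sup>c\<close> and its part inside \<open>\<Omega>(x,z)\<close>; since every configuration has positive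
  probability at time \<open>t\<close>, the conditional probability is \<open>1/(q-1)\<close>.

  For the Axelrod generator that preservation is checked through the forward equation,
  writing \<open>f Q\<close> as in-flow minus out-flow of single copy events and matching the in-flows of
  equivalent configurations by a permutation of the values of feature \<open>i\<close>.
\<close>

fun mat_pow :: "'a set \<Rightarrow> ('a \<Rightarrow> 'a \<Rightarrow> real) \<Rightarrow> nat \<Rightarrow> 'a \<Rightarrow> 'a \<Rightarrow> real" where
  "mat_pow S M 0 a b = (if a = b then 1 else 0)"
| "mat_pow S M (Suc n) a b = (\<Sum>c\<in>S. mat_pow S M n a c * M c b)"

definition mat_exp :: "'a set \<Rightarrow> ('a \<Rightarrow> 'a \<Rightarrow> real) \<Rightarrow> real \<Rightarrow> 'a \<Rightarrow> 'a \<Rightarrow> real" where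
  "mat_exp S M t a b = (\<Sum>n. t ^ n / fact n * mat_pow S M n a b)"

lemma gen_pow_eq_mat_pow: "gen_pow N F q n = mat_pow (configs N F q) (axelrod_gen N F) n"
  by (induction n) (simp_all add: fun_eq_iff)

lemma trans_prob_eq_mat_exp: "trans_prob N F q t = mat_exp (configs N F q) (axelrod_gen N F) t"
  by (simp add: fun_eq_iff trans_prob_def mat_exp_def gen_pow_eq_mat_pow)

lemma finite_matrix_bound:
  assumes "finite S"
  obtains c :: real where "0 \<le> c" "\<And>a b. a \<in> S \<Longrightarrow> b \<in> S \<Longrightarrow> \<bar>M a b\<bar> \<le> c"
proof
  let ?c = "Max (insert 0 ((\<lambda>(a, b). \<bar>M a b\<bar>) ` (S \<times> S)))"
  show "0 \<le> ?c" using assms by (intro Max_ge) auto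
  show "\<bar>M a b\<bar> \<le> ?c" if "a \<in> S" "b \<in> S" for a b
    using assms that by (intro Max_ge) auto
qed

lemma mat_pow_bound:
  assumes "finite S" "0 \<le> c" "\<And>a b. a \<in> S \<Longrightarrow> b \<in> S \<Longrightarrow> \<bar>M a b\<bar> \<le> c" "b \<in> S"
  shows "\<bar>mat_pow S M n a b\<bar> \<le> (real (card S) * c) ^ n"
  using assms(4)
proof (induction n arbitrary: b)
  case 0 show ?case by simp
next
  case (Suc n)
  have "\<bar>mat_pow S M (Suc n) a b\<bar> \<le> (\<Sum>e\<in>S. \<bar>mat_pow S M n a e\<bar> * \<bar>M e b\<bar>)"
    unfolding mat_pow.simps abs_mult[symmetric] by (rule sum_abs)
  also have "\<dots> \<le> (\<Sum>e\<in>S. (real (card S) * c) ^ n * c)"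
    by (intro sum_mono mult_mono Suc.IH assms(3) Suc.prems) (auto simp: assms(2))
  finally show ?case by (simp add: mult_ac)
qed

lemma exp_series_summable:
  fixes a :: "nat \<Rightarrow> real"
  assumes "\<And>n. \<bar>a n\<bar> \<le> C ^ n"
  shows "summable (\<lambda>n. \<bar>t ^ n / fact n * a n\<bar>)"
proof (rule summable_comparison_test)
  show "\<exists>N0. \<forall>n\<ge>N0. norm \<bar>t ^ n / fact n * a n\<bar> \<le> \<bar>t * C\<bar> ^ n / fact n"
  proof (intro exI allI impI)
    fix n :: nat
    have "\<bar>a n\<bar> \<le> \<bar>C\<bar> ^ n" using assms[of n] by (metis abs_ge_self order_trans power_abs power_mono)
    hence "\<bar>t\<bar> ^ n / fact n * \<bar>a n\<bar> \<le> \<bar>t\<bar> ^ n / fact n * \<bar>C\<bar> ^ n"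
      by (intro mult_left_mono) auto
    thus "norm \<bar>t ^ n / fact n * a n\<bar> \<le> \<bar>t * C\<bar> ^ n / fact n"
      by (simp add: abs_mult power_abs power_mult_distrib)
  qed
  show "summable (\<lambda>n. \<bar>t * C\<bar> ^ n / fact n)"
    using summable_exp[of "\<bar>t * C\<bar>"] by (simp add: divide_inverse mult.commute)
qed

lemma mat_pow_exp_summable:
  assumes "finite S" "b \<in> S"
  shows "summable (\<lambda>n. \<bar>t ^ n / fact n * mat_pow S M n a b\<bar>)"
proof -
  obtain c where "0 \<le> c" "\<And>a b. a \<in> S \<Longrightarrow> b \<in> S \<Longrightarrow> \<bar>M a b\<bar> \<le> c"
    using finite_matrix_bound[OF assms(1)] by blast
  thus ?thesis using mat_pow_bound[OF assms(1) _ _ assms(2)] by (intro exp_series_summable) blast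
qed

lemma mat_pow_times_shift:
  assumes "finite S" "b \<in> S"
  shows "(\<Sum>c\<in>S. mat_pow S M k a c * (M c b + r * (if c = b then 1 else 0)))
           = mat_pow S M (Suc k) a b + r * mat_pow S M k a b"
proof -
  have "(\<Sum>c\<in>S. mat_pow S M k a c * (if c = b then 1 else 0)) = mat_pow S M k a b"
    using assms by (simp add: if_distrib[of "\<lambda>x. _ * x"] sum.delta' cong: if_cong)
  thus ?thesis by (simp add: ring_distribs sum.distrib mult.left_commute[of _ r] flip: sum_distrib_left)
qed

text \<open>Pascal's rule in the form needed for the induction step of the binomial expansion.\<close>
lemma binomial_recursion_step:
  fixes f :: "nat \<Rightarrow> real"
  shows "(\<Sum>k\<le>n. real (n choose k) * r ^ (n - k) * (f (Suc k) + r * f k))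
       = (\<Sum>k\<le>Suc n. real (Suc n choose k) * r ^ (Suc n - k) * f k)"
proof -
  have e1: "(\<Sum>k\<le>Suc n. real (Suc n choose k) * r ^ (Suc n - k) * f k)
      = r ^ Suc n * f 0 + (\<Sum>k\<le>n. real (n choose k) * r ^ (n - k) * f (Suc k))
          + (\<Sum>k\<le>n. real (n choose Suc k) * r ^ (n - k) * f (Suc k))"
    by (subst sum.atMost_Suc_shift) (simp add: ring_distribs sum.distrib)
  have "r ^ Suc n * f 0 + (\<Sum>k\<le>n. real (n choose Suc k) * r ^ (n - k) * f (Suc k))
      = (\<Sum>k\<le>Suc n. real (n choose k) * r ^ (Suc n - k) * f k)"
    by (subst sum.atMost_Suc_shift[where n = n]) simp
  also have "\<dots> = (\<Sum>k\<le>n. real (n choose k) * r ^ (n - k) * (r * f k))"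
    by (simp add: Suc_diff_le mult_ac)
  finally show ?thesis
    unfolding e1 by (simp add: ring_distribs sum.distrib)
qed

lemma mat_pow_shift:
  assumes "finite S" "b \<in> S"
  shows "mat_pow S (\<lambda>a b. M a b + r * (if a = b then 1 else 0)) n a b
           = (\<Sum>k\<le>n. real (n choose k) * r ^ (n - k) * mat_pow S M k a b)"
  using assms(2)
proof (induction n arbitrary: b)
  case 0 show ?case by simp
next
  case (Suc n)
  have "mat_pow S (\<lambda>a b. M a b + r * (if a = b then 1 else 0)) (Suc n) a b
      = (\<Sum>k\<le>n. real (n choose k) * r ^ (n - k) *
           (\<Sum>c\<in>S. mat_pow S M k a c * (M c b + r * (if c = b then 1 else 0))))"
    by (simp add: Suc.IH sum_distrib_left sum_distrib_right mult.assoc sum.swap[of _ S])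
  also have "\<dots> = (\<Sum>k\<le>n. real (n choose k) * r ^ (n - k) *
                     (mat_pow S M (Suc k) a b + r * mat_pow S M k a b))"
    by (simp add: mat_pow_times_shift[OF assms(1) Suc.prems])
  also have "\<dots> = (\<Sum>k\<le>Suc n. real (Suc n choose k) * r ^ (Suc n - k) * mat_pow S M k a b)"
    by (rule binomial_recursion_step)
  finally show ?case .
qed

lemma mat_exp_shift:
  assumes "finite S" "b \<in> S"
  shows "mat_exp S (\<lambda>a b. M a b + r * (if a = b then 1 else 0)) t a b = exp (r * t) * mat_exp S M t a b"
proof -
  define f where "f k = t ^ k / fact k * mat_pow S M k a b" for k
  define g where "g l = (r * t) ^ l / fact l" for l
  have f_summable: "summable (\<lambda>k. norm (f k))"
    using mat_pow_exp_summable[OF assms] by (simp add: f_def)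
  have g_summable: "summable (\<lambda>l. norm (g l))"
    using summable_exp[of "\<bar>r * t\<bar>"] by (simp add: g_def abs_mult power_abs divide_inverse mult_ac)
  have g_sum: "(\<Sum>l. g l) = exp (r * t)"
    using exp_converges[of "r * t"] by (simp add: g_def sums_iff divide_inverse mult.commute)
  have coeff: "(\<Sum>k\<le>n. f k * g (n - k))
      = t ^ n / fact n * mat_pow S (\<lambda>a b. M a b + r * (if a = b then 1 else 0)) n a b" for n
  proof -
    have "f k * g (n - k) = t ^ n / fact n * (real (n choose k) * r ^ (n - k) * mat_pow S M k a b)"
      if "k \<le> n" for k
    proof -
      have "t ^ n = t ^ k * t ^ (n - k)" using that by (simp flip: power_add)
      thus ?thesis
        unfolding f_def g_def binomial_fact[OF that] power_mult_distrib by (simp add: field_simps)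
    qed
    thus ?thesis by (simp add: mat_pow_shift[OF assms] sum_distrib_left)
  qed
  have "mat_exp S M t a b * exp (r * t) = (\<Sum>n. \<Sum>k\<le>n. f k * g (n - k))"
    unfolding mat_exp_def f_def[symmetric] g_sum[symmetric] by (rule Cauchy_product[OF f_summable g_summable])
  thus ?thesis by (simp add: coeff mat_exp_def mult.commute)
qed

lemma mat_pow_nonneg:
  assumes "\<And>a b. a \<in> S \<Longrightarrow> b \<in> S \<Longrightarrow> 0 \<le> M a b" "b \<in> S"
  shows "0 \<le> mat_pow S M n a b"
  using assms(2) by (induction n arbitrary: b) (auto intro!: sum_nonneg mult_nonneg_nonneg assms(1))

lemma mat_exp_nonneg_matrix:
  assumes "finite S" "\<And>a b. a \<in> S \<Longrightarrow> b \<in> S \<Longrightarrow> 0 \<le> M a b" "0 \<le> t" "b \<in> S"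
  shows "0 \<le> mat_exp S M t a b" and "1 \<le> mat_exp S M t b b"
proof -
  have terms_nonneg: "0 \<le> t ^ n / fact n * mat_pow S M n a b" for n a
    using mat_pow_nonneg[OF assms(2,4)] assms(3) by simp
  have summable: "summable (\<lambda>n. t ^ n / fact n * mat_pow S M n a b)" for a
    using mat_pow_exp_summable[OF assms(1,4)] by (rule summable_rabs_cancel)
  show "0 \<le> mat_exp S M t a b"
    unfolding mat_exp_def by (intro suminf_nonneg summable terms_nonneg)
  have "(\<Sum>n\<in>{0}. t ^ n / fact n * mat_pow S M n b b) \<le> mat_exp S M t b b"
    unfolding mat_exp_def by (intro sum_le_suminf summable terms_nonneg) auto
  thus "1 \<le> mat_exp S M t b b" by simp
qed

text \<open>If all off-diagonal entries of \<open>M\<close> are nonnegative (as for a Markov generator),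
  then \<open>exp (t M)\<close> is nonnegative with positive diagonal: shift \<open>M\<close> by a multiple of the
  identity to make it nonnegative and apply the two previous lemmas.\<close>
lemma mat_exp_offdiag_nonneg:
  assumes "finite S" "\<And>a b. a \<in> S \<Longrightarrow> b \<in> S \<Longrightarrow> a \<noteq> b \<Longrightarrow> 0 \<le> M a b" "0 \<le> t" "b \<in> S"
  shows "0 \<le> mat_exp S M t a b" and "0 < mat_exp S M t b b"
proof -
  obtain c where c: "0 \<le> c" "\<And>a b. a \<in> S \<Longrightarrow> b \<in> S \<Longrightarrow> \<bar>M a b\<bar> \<le> c"
    using finite_matrix_bound[OF assms(1)] by blast
  define M' where "M' a b = M a b + c * (if a = b then 1 else 0)" for a b
  have M'_nonneg: "0 \<le> M' a b" if "a \<in> S" "b \<in> S" for a b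
    using assms(2)[OF that] c(2)[OF that] by (auto simp: M'_def)
  have M_eq: "M = (\<lambda>a b. M' a b + (- c) * (if a = b then 1 else 0))"
    by (simp add: M'_def fun_eq_iff)
  have exp_eq: "mat_exp S M t a' b = exp (- c * t) * mat_exp S M' t a' b" for a'
    by (subst M_eq) (rule mat_exp_shift[OF assms(1,4)])
  show "0 \<le> mat_exp S M t a b"
    unfolding exp_eq using mat_exp_nonneg_matrix(1)[of S M' t b a, OF assms(1) M'_nonneg assms(3,4)] by simp
  show "0 < mat_exp S M t b b"
    unfolding exp_eq using mat_exp_nonneg_matrix(2)[of S M' t b, OF assms(1) M'_nonneg assms(3,4)] by simp
qed

lemma mat_pow_colsum_invariant:
  assumes step: "\<And>f b b'. (\<And>c c'. R c c' \<Longrightarrow> f c = f c') \<Longrightarrow> R b b'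
                     \<Longrightarrow> (\<Sum>c\<in>S. f c * M c b) = (\<Sum>c\<in>S. f c * M c b')"
    and dom: "\<And>b b'. R b b' \<Longrightarrow> b \<in> S \<and> b' \<in> S" and "finite S"
  shows "R b b' \<Longrightarrow> (\<Sum>a\<in>S. mat_pow S M n a b) = (\<Sum>a\<in>S. mat_pow S M n a b')"
proof (induction n arbitrary: b b')
  case 0
  thus ?case using dom[OF 0] \<open>finite S\<close> by (simp add: sum.delta')
next
  case (Suc n)
  have "(\<Sum>a\<in>S. mat_pow S M (Suc n) a b) = (\<Sum>c\<in>S. (\<Sum>a\<in>S. mat_pow S M n a c) * M c b)" for b
    by (simp add: sum_distrib_right) (rule sum.swap)
  thus ?case using step[OF Suc.IH Suc.prems] by simp
qed

lemma mat_exp_colsum_invariant: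
  assumes step: "\<And>f b b'. (\<And>c c'. R c c' \<Longrightarrow> f c = f c') \<Longrightarrow> R b b'
                     \<Longrightarrow> (\<Sum>c\<in>S. f c * M c b) = (\<Sum>c\<in>S. f c * M c b')"
    and dom: "\<And>b b'. R b b' \<Longrightarrow> b \<in> S \<and> b' \<in> S" and "finite S" and "R b b'"
  shows "(\<Sum>a\<in>S. mat_exp S M t a b) = (\<Sum>a\<in>S. mat_exp S M t a b')"
proof -
  have colsum: "(\<Sum>a\<in>S. mat_exp S M t a e) = (\<Sum>n. t ^ n / fact n * (\<Sum>a\<in>S. mat_pow S M n a e))"
    if "e \<in> S" for e
    unfolding mat_exp_def sum_distrib_left
    by (rule suminf_sum[symmetric], rule summable_rabs_cancel, rule mat_pow_exp_summable[OF \<open>finite S\<close> that])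
  show ?thesis
    using dom[OF \<open>R b b'\<close>] mat_pow_colsum_invariant[where R = R and S = S and M = M, OF step dom \<open>finite S\<close> \<open>R b b'\<close>]
    by (simp add: colsum)
qed


text \<open>The configuration space is finite (it embeds into the tables \<open>{0..N} \<times> {1..F} \<rightarrow> {1..q}\<close>).\<close>
lemma configs_finite: "finite (configs N F q)"
proof -
  let ?ext = "\<lambda>g :: nat \<times> nat \<Rightarrow> nat. \<lambda>v j. if v \<le> N \<and> 1 \<le> j \<and> j \<le> F then g (v, j) else 0"
  let ?tables = "PiE ({..N} \<times> {1..F}) (\<lambda>_. {1..q})"
  have "configs N F q \<subseteq> ?ext ` ?tables"
  proof
    fix eta assume eta: "eta \<in> configs N F q"
    let ?g = "restrict (\<lambda>(v, j). eta v j) ({..N} \<times> {1..F})"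
    have "?g \<in> ?tables" and "eta = ?ext ?g"
      using eta by (auto simp: configs_def fun_eq_iff)
    thus "eta \<in> ?ext ` ?tables" by blast
  qed
  moreover have "finite ?tables" by (intro finite_PiE) auto
  ultimately show ?thesis using finite_subset by blast
qed

lemma configs_val:
  "eta \<in> configs N F q \<Longrightarrow> v \<le> N \<Longrightarrow> j \<in> {1..F} \<Longrightarrow> eta v j \<in> {1..q}"
  by (auto simp: configs_def)

lemma configs_out:
  "eta \<in> configs N F q \<Longrightarrow> \<not> (v \<le> N \<and> 1 \<le> j \<and> j \<le> F) \<Longrightarrow> eta v j = 0"
  by (auto simp: configs_def)

abbreviation set_feat :: "config \<Rightarrow> nat \<Rightarrow> nat \<Rightarrow> nat \<Rightarrow> config" where
  "set_feat z u j d \<equiv> z(u := (z u)(j := d))"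

lemma configs_set_feat:
  "eta \<in> configs N F q \<Longrightarrow> u \<le> N \<Longrightarrow> j \<in> {1..F} \<Longrightarrow> d \<in> {1..q}
   \<Longrightarrow> set_feat eta u j d \<in> configs N F q"
  by (auto simp: configs_def)

lemma path_pairsD: "(u, v) \<in> path_pairs N \<Longrightarrow> u \<le> N \<and> v \<le> N \<and> u \<noteq> v"
  by (auto simp: path_pairs_def)

lemma path_other_neighbour:
  assumes "(u, v) \<in> path_pairs N"
  obtains w where "(u, w) \<in> path_pairs N" "\<And>n. (u, n) \<in> path_pairs N \<Longrightarrow> n = v \<or> n = w"
proof -
  define w where "w = (if v = u + 1 then (if 1 \<le> u then u - 1 else v)
                       else (if u + 1 \<le> N then u + 1 else v))"
  have "(u, w) \<in> path_pairs N" "\<And>n. (u, n) \<in> path_pairs N \<Longrightarrow> n = v \<or> n = w"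
    using assms by (auto simp: path_pairs_def w_def)
  thus ?thesis using that by blast
qed

definition edge_rate :: "nat \<Rightarrow> config \<Rightarrow> nat \<Rightarrow> nat \<Rightarrow> real" where
  "edge_rate F z u v = similarity F z u v / 2 / real (card (diff_feats F z u v))"

lemma axelrod_gen_by_feature:
  "axelrod_gen N F z xi = (\<Sum>(u, v)\<in>path_pairs N. \<Sum>j\<in>{1..F}.
      if j \<in> diff_feats F z u v
      then edge_rate F z u v * ((if set_feat z u j (z v j) = xi then 1 else 0) - (if z = xi then 1 else 0))
      else 0)"
proof -
  have restrict: "(\<Sum>j\<in>diff_feats F z u v. h j) = (\<Sum>j\<in>{1..F}. if j \<in> diff_feats F z u v then h j else 0)"
    for u v and h :: "nat \<Rightarrow> real"
  proof -
    have "diff_feats F z u v = {1..F} \<inter> diff_feats F z u v" by (auto simp: diff_feats_def)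
    thus ?thesis by (metis finite_atLeastAtMost sum.inter_restrict)
  qed
  show ?thesis unfolding axelrod_gen_def edge_rate_def restrict by simp
qed

lemma copy_preimage:
  assumes xi: "xi \<in> configs N F q" and uv: "(u, v) \<in> path_pairs N" and j: "j \<in> {1..F}"
  shows "{z \<in> configs N F q. j \<in> diff_feats F z u v \<and> set_feat z u j (z v j) = xi}
    = (if xi u j = xi v j then (\<lambda>d. set_feat xi u j d) ` ({1..q} - {xi v j}) else {})"
proof -
  have u: "u \<le> N" and uv_ne: "u \<noteq> v" using path_pairsD[OF uv] by auto
  have pre: "z = set_feat xi u j (z u j) \<and> z v j = xi v j \<and> xi u j = xi v j"
    if "set_feat z u j (z v j) = xi" for z
  proof -
    have "set_feat xi u j (z u j) = z" unfolding that[symmetric] by simp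
    moreover have "xi u j = z v j" "xi v j = z v j" using that uv_ne by auto
    ultimately show ?thesis by simp
  qed
  have post: "set_feat (set_feat xi u j d) u j (xi v j) = xi \<and> set_feat xi u j d v j = xi v j"
    if "xi u j = xi v j" for d
    using that uv_ne by (auto simp: fun_eq_iff)
  show ?thesis
  proof (cases "xi u j = xi v j")
    case True
    show ?thesis
    proof (intro set_eqI iffI)
      fix z assume "z \<in> {z \<in> configs N F q. j \<in> diff_feats F z u v \<and> set_feat z u j (z v j) = xi}"
      hence z: "z \<in> configs N F q" "z u j \<noteq> z v j" "set_feat z u j (z v j) = xi"
        by (auto simp: diff_feats_def)
      have "z u j \<in> {1..q} - {xi v j}" using configs_val[OF z(1) u j] z pre by auto
      hence "z \<in> (\<lambda>d. set_feat xi u j d) ` ({1..q} - {xi v j})"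
        using pre[OF z(3)] by (metis image_eqI)
      thus "z \<in> (if xi u j = xi v j then (\<lambda>d. set_feat xi u j d) ` ({1..q} - {xi v j}) else {})"
        using True by simp
    next
      fix z assume "z \<in> (if xi u j = xi v j then (\<lambda>d. set_feat xi u j d) ` ({1..q} - {xi v j}) else {})"
      hence "z \<in> (\<lambda>d. set_feat xi u j d) ` ({1..q} - {xi v j})" using True by simp
      then obtain d where "d \<in> {1..q} - {xi v j}" and z: "z = set_feat xi u j d" by (rule imageE)
      hence d: "d \<in> {1..q}" "d \<noteq> xi v j" by auto
      show "z \<in> {z \<in> configs N F q. j \<in> diff_feats F z u v \<and> set_feat z u j (z v j) = xi}"
        using configs_set_feat[OF xi u j d(1)] post[OF True, of d] d j uv_ne
        by (auto simp: z diff_feats_def)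
    qed
  next
    case False
    thus ?thesis using pre by auto
  qed
qed

lemma copy_flow:
  assumes xi: "xi \<in> configs N F q" and uv: "(u, v) \<in> path_pairs N" and j: "j \<in> {1..F}"
  shows "(\<Sum>z\<in>configs N F q. f z *
      (if j \<in> diff_feats F z u v
       then edge_rate F z u v * ((if set_feat z u j (z v j) = xi then 1 else 0) - (if z = xi then 1 else 0))
       else 0))
   = (if xi u j = xi v j
      then (\<Sum>d\<in>{1..q} - {xi v j}. f (set_feat xi u j d) * edge_rate F (set_feat xi u j d) u v)
      else 0)
     - (if j \<in> diff_feats F xi u v then f xi * edge_rate F xi u v else 0)"
proof -
  define g where "g z = f z * edge_rate F z u v" for z
  have "(\<Sum>z\<in>configs N F q. f z *
      (if j \<in> diff_feats F z u v
       then edge_rate F z u v * ((if set_feat z u j (z v j) = xi then 1 else 0) - (if z = xi then 1 else 0))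
       else 0))
    = (\<Sum>z\<in>configs N F q. if j \<in> diff_feats F z u v \<and> set_feat z u j (z v j) = xi then g z else 0)
      - (\<Sum>z\<in>configs N F q. if z = xi then (if j \<in> diff_feats F z u v then g z else 0) else 0)"
    unfolding sum_subtractf[symmetric] by (intro sum.cong refl) (auto simp: g_def algebra_simps)
  also have "(\<Sum>z\<in>configs N F q. if j \<in> diff_feats F z u v \<and> set_feat z u j (z v j) = xi then g z else 0)
      = sum g {z \<in> configs N F q. j \<in> diff_feats F z u v \<and> set_feat z u j (z v j) = xi}"
    using configs_finite by (simp add: sum.inter_filter)
  also have "\<dots> = (if xi u j = xi v j then (\<Sum>d\<in>{1..q} - {xi v j}. g (set_feat xi u j d)) else 0)"
  proof -
    have "inj_on (\<lambda>d. set_feat xi u j d) ({1..q} - {xi v j})"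
      by (rule inj_onI) (metis fun_upd_same)
    thus ?thesis unfolding copy_preimage[OF xi uv j] by (simp add: sum.reindex)
  qed
  also have "(\<Sum>z\<in>configs N F q. if z = xi then (if j \<in> diff_feats F z u v then g z else 0) else 0)
      = (if j \<in> diff_feats F xi u v then g xi else 0)"
    using xi configs_finite by (simp add: sum.delta')
  finally show ?thesis by (simp add: g_def)
qed

text \<open>The row vector \<open>f\<close> multiplied by the generator, evaluated at \<open>xi\<close>: a sum of in- and
  out-flows over all edges and features (the right-hand side of Kolmogorov's forward equation).\<close>
lemma gen_row_action:
  assumes xi: "xi \<in> configs N F q"
  shows "(\<Sum>z\<in>configs N F q. f z * axelrod_gen N F z xi) =
    (\<Sum>(u, v)\<in>path_pairs N. \<Sum>j\<in>{1..F}.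
       (if xi u j = xi v j
        then (\<Sum>d\<in>{1..q} - {xi v j}. f (set_feat xi u j d) * edge_rate F (set_feat xi u j d) u v)
        else 0)
       - (if j \<in> diff_feats F xi u v then f xi * edge_rate F xi u v else 0))"
proof -
  have "(\<Sum>z\<in>configs N F q. f z * axelrod_gen N F z xi)
      = (\<Sum>(u, v)\<in>path_pairs N. \<Sum>j\<in>{1..F}. \<Sum>z\<in>configs N F q. f z *
          (if j \<in> diff_feats F z u v
           then edge_rate F z u v * ((if set_feat z u j (z v j) = xi then 1 else 0) - (if z = xi then 1 else 0))
           else 0))"
    unfolding axelrod_gen_by_feature sum_distrib_left
    by (subst sum.swap) (auto intro!: sum.cong simp: sum_distrib_left intro: sum.swap)
  also have "\<dots> = (\<Sum>(u, v)\<in>path_pairs N. \<Sum>j\<in>{1..F}.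
       (if xi u j = xi v j
        then (\<Sum>d\<in>{1..q} - {xi v j}. f (set_feat xi u j d) * edge_rate F (set_feat xi u j d) u v)
        else 0)
       - (if j \<in> diff_feats F xi u v then f xi * edge_rate F xi u v else 0))"
    by (intro sum.cong refl) (clarsimp simp: copy_flow[OF xi])
  finally show ?thesis .
qed

definition same_pattern :: "nat \<Rightarrow> nat \<Rightarrow> nat \<Rightarrow> nat \<Rightarrow> config \<Rightarrow> config \<Rightarrow> bool" where
  "same_pattern N F q i xi xi' \<longleftrightarrow> xi \<in> configs N F q \<and> xi' \<in> configs N F q
     \<and> (\<forall>v j. j \<noteq> i \<longrightarrow> xi v j = xi' v j)
     \<and> (\<forall>u v. (u, v) \<in> path_pairs N \<longrightarrow> (xi u i = xi v i \<longleftrightarrow> xi' u i = xi' v i))"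

lemma same_pattern_edge_iff:
  assumes "same_pattern N F q i z z'" "(u, v) \<in> path_pairs N"
  shows "z u j = z v j \<longleftrightarrow> z' u j = z' v j"
  using assms unfolding same_pattern_def by (cases "j = i") auto

lemma same_pattern_rates:
  assumes "same_pattern N F q i z z'" "(u, v) \<in> path_pairs N"
  shows "diff_feats F z u v = diff_feats F z' u v" and "edge_rate F z u v = edge_rate F z' u v"
  using same_pattern_edge_iff[OF assms]
  by (auto simp: diff_feats_def edge_rate_def similarity_def)

lemma two_point_permutation:
  assumes "a \<in> S" "a' \<in> S" "b \<in> S" "b' \<in> S" "a = b \<longleftrightarrow> a' = b'"
  obtains p where "bij_betw p S S" "p a = a'" "p b = b'"
proof
  define c where "c = transpose a a' b"
  have c: "c \<in> S" using assms(1-3) by (auto simp: c_def transpose_def)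
  show "bij_betw (transpose c b' \<circ> transpose a a') S S"
    using assms(1,2,4) c by (intro bij_betw_trans[where B = S]) auto
  show "(transpose c b' \<circ> transpose a a') b = b'" by (simp add: c_def)
  show "(transpose c b' \<circ> transpose a a') a = a'"
  proof (cases "a = b")
    case True thus ?thesis using assms(5) by (simp add: c_def)
  next
    case False
    hence "c \<noteq> a'" "b' \<noteq> a'" using assms(5) by (auto simp: c_def transpose_eq_iff)
    thus ?thesis by simp
  qed
qed

lemma same_pattern_relabel:
  assumes s: "same_pattern N F q i xi xi'" and u: "u \<le> N" and i: "i \<in> {1..F}"
    and p: "bij_betw p {1..q} {1..q}" and nb: "\<And>n. (u, n) \<in> path_pairs N \<Longrightarrow> p (xi n i) = xi' n i"
    and d: "d \<in> {1..q}"
  shows "same_pattern N F q i (set_feat xi u i d) (set_feat xi' u i (p d))"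
proof -
  have xi: "xi \<in> configs N F q" and xi': "xi' \<in> configs N F q" using s by (auto simp: same_pattern_def)
  have p_eq_iff: "p d = p e \<longleftrightarrow> d = e" if "e \<in> {1..q}" for e
    using p d that by (auto simp: bij_betw_def dest: inj_onD)
  have edge: "set_feat xi u i d a i = set_feat xi u i d b i
       \<longleftrightarrow> set_feat xi' u i (p d) a i = set_feat xi' u i (p d) b i" if ab: "(a, b) \<in> path_pairs N" for a b
  proof -
    have vals: "xi a i \<in> {1..q}" "xi b i \<in> {1..q}"
      using path_pairsD[OF ab] configs_val[OF xi _ i] by auto
    have ne: "a \<noteq> b" using path_pairsD[OF ab] by simp
    consider (at_a) "a = u" | (at_b) "b = u" | (away) "a \<noteq> u" "b \<noteq> u" by blast
    thus ?thesis
    proof cases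
      case at_a
      hence "p (xi b i) = xi' b i" using nb ab by simp
      thus ?thesis using at_a ne p_eq_iff[OF vals(2)] by auto
    next
      case at_b
      hence "p (xi a i) = xi' a i" using nb ab by (auto simp: path_pairs_def)
      thus ?thesis using at_b ne p_eq_iff[OF vals(1)] by auto
    next
      case away
      thus ?thesis using s ab by (simp add: same_pattern_def)
    qed
  qed
  have "p d \<in> {1..q}" using p d by (auto simp: bij_betw_def)
  thus ?thesis
    using configs_set_feat[OF xi u i d] configs_set_feat[OF xi' u i] edge s
    by (auto simp: same_pattern_def)
qed

lemma same_pattern_set_other:
  assumes s: "same_pattern N F q i xi xi'" and u: "u \<le> N" and j: "j \<in> {1..F}" "j \<noteq> i"
    and d: "d \<in> {1..q}"
  shows "same_pattern N F q i (set_feat xi u j d) (set_feat xi' u j d)"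
  using s configs_set_feat[OF _ u j(1) d] j(2) by (auto simp: same_pattern_def)

lemma copy_relabelling:
  assumes s: "same_pattern N F q i xi xi'" and uv: "(u, v) \<in> path_pairs N" and j: "j \<in> {1..F}"
    and agree: "xi u j = xi v j"
  obtains p where "bij_betw p ({1..q} - {xi v j}) ({1..q} - {xi' v j})"
    "\<And>d. d \<in> {1..q} \<Longrightarrow> same_pattern N F q i (set_feat xi u j d) (set_feat xi' u j (p d))"
proof (cases "j = i")
  case False
  hence "xi v j = xi' v j" using s by (auto simp: same_pattern_def)
  thus ?thesis
    using that[of id] same_pattern_set_other[OF s _ j False] path_pairsD[OF uv] by auto
next
  case True
  have xi: "xi \<in> configs N F q" and xi': "xi' \<in> configs N F q" using s by (auto simp: same_pattern_def)
  obtain w where uw: "(u, w) \<in> path_pairs N" and nb: "\<And>n. (u, n) \<in> path_pairs N \<Longrightarrow> n = v \<or> n = w"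
    using path_other_neighbour[OF uv] by blast
  have vals: "xi n i \<in> {1..q}" "xi' n i \<in> {1..q}" if "n \<le> N" for n
    using configs_val[OF xi that] configs_val[OF xi' that] j True by auto
  have "xi v i = xi w i \<longleftrightarrow> xi' v i = xi' w i"
    using same_pattern_edge_iff[OF s uv, of i] same_pattern_edge_iff[OF s uw, of i] agree True by auto
  then obtain p where p: "bij_betw p {1..q} {1..q}" "p (xi v i) = xi' v i" "p (xi w i) = xi' w i"
    using two_point_permutation vals path_pairsD[OF uv] path_pairsD[OF uw] by metis
  show ?thesis
  proof (rule that)
    show "bij_betw p ({1..q} - {xi v j}) ({1..q} - {xi' v j})"
      using p vals path_pairsD[OF uv] True by (intro bij_betw_DiffI) auto
    show "same_pattern N F q i (set_feat xi u j d) (set_feat xi' u j (p d))" if "d \<in> {1..q}" for d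
      using same_pattern_relabel[OF s _ _ p(1) _ that] path_pairsD[OF uv] nb p j True by metis
  qed
qed

text \<open>Multiplying a pattern-invariant row vector by the generator gives a pattern-invariant
  vector: the out-flows agree edge by edge, and the in-flows agree after relabelling.\<close>
lemma gen_row_action_invariant:
  assumes f: "\<And>z z'. same_pattern N F q i z z' \<Longrightarrow> f z = f z'" and s: "same_pattern N F q i xi xi'"
  shows "(\<Sum>z\<in>configs N F q. f z * axelrod_gen N F z xi) = (\<Sum>z\<in>configs N F q. f z * axelrod_gen N F z xi')"
proof -
  have xi: "xi \<in> configs N F q" and xi': "xi' \<in> configs N F q" using s by (auto simp: same_pattern_def)
  have inflow: "(if xi u j = xi v j
        then (\<Sum>d\<in>{1..q} - {xi v j}. f (set_feat xi u j d) * edge_rate F (set_feat xi u j d) u v) else 0)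
      = (if xi' u j = xi' v j
        then (\<Sum>d\<in>{1..q} - {xi' v j}. f (set_feat xi' u j d) * edge_rate F (set_feat xi' u j d) u v) else 0)"
    if uv: "(u, v) \<in> path_pairs N" and j: "j \<in> {1..F}" for u v j
  proof (cases "xi u j = xi v j")
    case True
    obtain p where p: "bij_betw p ({1..q} - {xi v j}) ({1..q} - {xi' v j})"
      and sp: "\<And>d. d \<in> {1..q} \<Longrightarrow> same_pattern N F q i (set_feat xi u j d) (set_feat xi' u j (p d))"
      using copy_relabelling[OF s uv j True] by blast
    have "(\<Sum>d\<in>{1..q} - {xi v j}. f (set_feat xi u j d) * edge_rate F (set_feat xi u j d) u v)
        = (\<Sum>d\<in>{1..q} - {xi v j}. f (set_feat xi' u j (p d)) * edge_rate F (set_feat xi' u j (p d)) u v)"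
      using f[OF sp] same_pattern_rates(2)[OF sp uv] by (intro sum.cong) auto
    also have "\<dots> = (\<Sum>d\<in>{1..q} - {xi' v j}. f (set_feat xi' u j d) * edge_rate F (set_feat xi' u j d) u v)"
      by (rule sum.reindex_bij_betw[OF p])
    finally show ?thesis using True same_pattern_edge_iff[OF s uv] by simp
  next
    case False
    thus ?thesis using same_pattern_edge_iff[OF s uv] by simp
  qed
  have outflow: "(if j \<in> diff_feats F xi u v then f xi * edge_rate F xi u v else 0)
      = (if j \<in> diff_feats F xi' u v then f xi' * edge_rate F xi' u v else 0)"
    if "(u, v) \<in> path_pairs N" for u v j
    using same_pattern_rates[OF s that] f[OF s] by simp
  show ?thesis
    unfolding gen_row_action[OF xi] gen_row_action[OF xi'] using inflow outflow
    by (intro sum.cong refl) auto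
qed

text \<open>The law at time \<open>t\<close> from the uniform start is the normalised column sum of \<open>exp (t Q)\<close>,
  so by the general invariance principle it is constant on pattern classes.\<close>
lemma law_at_invariant:
  assumes "same_pattern N F q i xi xi'"
  shows "law_at N F q t xi = law_at N F q t xi'"
proof -
  have "(\<Sum>eta\<in>configs N F q. trans_prob N F q t eta xi) = (\<Sum>eta\<in>configs N F q. trans_prob N F q t eta xi')"
    unfolding trans_prob_eq_mat_exp
  proof (rule mat_exp_colsum_invariant[where R = "same_pattern N F q i"])
    show "(\<Sum>c\<in>configs N F q. f c * axelrod_gen N F c b) = (\<Sum>c\<in>configs N F q. f c * axelrod_gen N F c b')"
      if "\<And>c c'. same_pattern N F q i c c' \<Longrightarrow> f c = f c'" "same_pattern N F q i b b'" for f b b'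
      using gen_row_action_invariant that by blast
  qed (use assms in \<open>auto simp: same_pattern_def configs_finite\<close>)
  thus ?thesis by (simp add: law_at_def flip: sum_divide_distrib)
qed

text \<open>Every configuration has positive probability at time \<open>t\<close>: the generator has nonnegative
  off-diagonal entries, so \<open>exp (t Q)\<close> is nonnegative with positive diagonal.\<close>
lemma law_at_pos:
  assumes xi: "xi \<in> configs N F q" and t: "0 \<le> t"
  shows "0 < law_at N F q t xi"
proof -
  have offdiag: "0 \<le> axelrod_gen N F a b" if "a \<noteq> b" for a b
    unfolding axelrod_gen_def using that
    by (auto intro!: sum_nonneg mult_nonneg_nonneg divide_nonneg_nonneg simp: similarity_def)
  have card: "0 < real (card (configs N F q))"
    using xi configs_finite card_gt_0_iff by fastforce
  note trans = mat_exp_offdiag_nonneg[where S = "configs N F q" and M = "axelrod_gen N F",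
                 OF configs_finite offdiag t xi, folded trans_prob_eq_mat_exp]
  have "trans_prob N F q t xi xi \<le> (\<Sum>eta\<in>configs N F q. trans_prob N F q t eta xi)"
    using xi trans(1) by (intro member_le_sum) (auto simp: configs_finite)
  moreover have "law_at N F q t xi = (\<Sum>eta\<in>configs N F q. trans_prob N F q t eta xi) / real (card (configs N F q))"
    by (simp add: law_at_def sum_divide_distrib)
  ultimately show ?thesis using trans(2) card by simp
qed

text \<open>It only changes the agreement of feature \<open>i\<close> along the edge \<open>(y, y+1)\<close>,
  and not even there if the value at \<open>y\<close> is neither \<open>a\<close> nor \<open>c\<close>.\<close>
definition recolour_above :: "nat \<Rightarrow> nat \<Rightarrow> nat \<Rightarrow> nat \<Rightarrow> config \<Rightarrow> config" where
  "recolour_above i y a c xi = (\<lambda>v j. if y < v \<and> j = i then transpose a c (xi v i) else xi v j)"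

lemma recolour_above_configs:
  assumes xi: "xi \<in> configs N F q" and i: "i \<in> {1..F}" and ac: "a \<in> {1..q}" "c \<in> {1..q}"
  shows "recolour_above i y a c xi \<in> configs N F q"
  unfolding configs_def recolour_above_def
proof (intro CollectI allI conjI impI)
  fix v j
  show "(if y < v \<and> j = i then transpose a c (xi v i) else xi v j) \<in> {1..q}"
    if "v \<le> N \<and> 1 \<le> j \<and> j \<le> F"
    using that configs_val[OF xi] ac by (auto simp: transpose_def)
  show "(if y < v \<and> j = i then transpose a c (xi v i) else xi v j) = 0"
    if "\<not> (v \<le> N \<and> 1 \<le> j \<and> j \<le> F)"
    using that configs_out[OF xi] i ac by (auto simp: transpose_def)
qed

lemma recolour_above_same_pattern:
  assumes xi: "xi \<in> configs N F q" and i: "i \<in> {1..F}" and ac: "a \<in> {1..q}" "c \<in> {1..q}"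
    and fixed: "xi y i \<noteq> a" "xi y i \<noteq> c"
  shows "same_pattern N F q i xi (recolour_above i y a c xi)"
proof -
  have right: "recolour_above i y a c xi u i = transpose a c (xi u i)" if "y \<le> u" for u
    using that fixed by (cases "u = y") (auto simp: recolour_above_def)
  have left: "recolour_above i y a c xi u i = xi u i" if "u \<le> y" for u
    using that by (simp add: recolour_above_def)
  have edge: "xi u i = xi v i \<longleftrightarrow> recolour_above i y a c xi u i = recolour_above i y a c xi v i"
    if "(u, v) \<in> path_pairs N" for u v
  proof (cases "y \<le> u \<and> y \<le> v")
    case True thus ?thesis using right by (auto dest: transpose_eq_imp_eq)
  next
    case False
    hence "u \<le> y \<and> v \<le> y" using that by (auto simp: path_pairs_def)
    thus ?thesis using left by simp
  qed
  show ?thesis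
    using xi recolour_above_configs[OF xi i ac] edge
    by (auto simp: same_pattern_def recolour_above_def)
qed

lemma recolour_above_bij:
  fixes q :: nat
  assumes xyz: "x < y" "y < z" "z \<le> N" and i: "i \<in> {1..F}"
  defines "B \<equiv> configs N F q \<inter> - (Omega i x y \<union> Omega i y z)"
  shows "bij_betw (\<lambda>(xi, c). recolour_above i y (xi x i) c xi)
           (SIGMA xi:B \<inter> Omega i x z. {1..q} - {xi y i}) B"
proof (rule bij_betw_byWitness[where f' = "\<lambda>xi. (recolour_above i y (xi x i) (xi z i) xi, xi z i)"])
  have vals: "xi v i \<in> {1..q}" if "xi \<in> configs N F q" "v \<le> N" for xi v
    using configs_val that i by blast
  show "\<forall>p\<in>SIGMA xi:B \<inter> Omega i x z. {1..q} - {xi y i}.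
          (\<lambda>xi. (recolour_above i y (xi x i) (xi z i) xi, xi z i)) ((\<lambda>(xi, c). recolour_above i y (xi x i) c xi) p) = p"
    using xyz by (auto simp: recolour_above_def fun_eq_iff Omega_def)
  show "\<forall>xi\<in>B. (\<lambda>(xi, c). recolour_above i y (xi x i) c xi) (recolour_above i y (xi x i) (xi z i) xi, xi z i) = xi"
    using xyz by (auto simp: recolour_above_def fun_eq_iff Omega_def)
  show "(\<lambda>(xi, c). recolour_above i y (xi x i) c xi) ` (SIGMA xi:B \<inter> Omega i x z. {1..q} - {xi y i}) \<subseteq> B"
  proof (rule image_subsetI)
    fix p assume "p \<in> (SIGMA xi:B \<inter> Omega i x z. {1..q} - {xi y i})"
    then obtain xi c where p: "p = (xi, c)" and
      xi: "xi \<in> B" "xi \<in> Omega i x z" and c: "c \<in> {1..q}" "c \<noteq> xi y i" by blast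
    have "recolour_above i y (xi x i) c xi \<in> configs N F q"
      using xi xyz vals by (intro recolour_above_configs c(1) i) (auto simp: B_def)
    moreover have "recolour_above i y (xi x i) c xi \<notin> Omega i x y \<union> Omega i y z"
      using xi c xyz by (auto simp: B_def recolour_above_def Omega_def)
    ultimately show "(\<lambda>(xi, c). recolour_above i y (xi x i) c xi) p \<in> B" by (simp add: B_def p)
  qed
  show "(\<lambda>xi. (recolour_above i y (xi x i) (xi z i) xi, xi z i)) ` B
          \<subseteq> (SIGMA xi:B \<inter> Omega i x z. {1..q} - {xi y i})"
  proof (rule image_subsetI)
    fix xi assume xi: "xi \<in> B"
    have "recolour_above i y (xi x i) (xi z i) xi \<in> configs N F q"
      using xi xyz vals by (intro recolour_above_configs i) (auto simp: B_def)
    moreover have "recolour_above i y (xi x i) (xi z i) xi \<in> Omega i x z - (Omega i x y \<union> Omega i y z)"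
      using xi xyz by (auto simp: B_def recolour_above_def Omega_def)
    moreover have "xi z i \<in> {1..q} - {recolour_above i y (xi x i) (xi z i) xi y i}"
      using xi xyz vals by (auto simp: B_def recolour_above_def Omega_def)
    ultimately show "(recolour_above i y (xi x i) (xi z i) xi, xi z i)
          \<in> (SIGMA xi:B \<inter> Omega i x z. {1..q} - {xi y i})"
      by (auto simp: B_def)
  qed
qed

lemma pattern_invariant_count:
  assumes L: "\<And>xi xi'. same_pattern N F q i xi xi' \<Longrightarrow> L xi = L xi'"
    and xyz: "x < y" "y < z" "z \<le> N" and i: "i \<in> {1..F}"
  shows "(\<Sum>xi\<in>configs N F q \<inter> - (Omega i x y \<union> Omega i y z). L xi)
       = (real q - 1) * (\<Sum>xi\<in>configs N F q \<inter> (Omega i x z \<inter> - (Omega i x y \<union> Omega i y z)). L xi)"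
proof -
  let ?B = "configs N F q \<inter> - (Omega i x y \<union> Omega i y z)"
  let ?AB = "?B \<inter> Omega i x z"
  let ?recolour = "\<lambda>(xi, c). recolour_above i y (xi x i) c xi"
  have "(\<Sum>xi\<in>?B. L xi) = (\<Sum>p\<in>(SIGMA xi:?AB. {1..q} - {xi y i}). L (?recolour p))"
    by (rule sum.reindex_bij_betw[OF recolour_above_bij[OF xyz i], symmetric])
  also have "\<dots> = (\<Sum>(xi, c)\<in>(SIGMA xi:?AB. {1..q} - {xi y i}). L xi)"
  proof (intro sum.cong refl)
    fix p assume "p \<in> (SIGMA xi:?AB. {1..q} - {xi y i})"
    then obtain xi c where p: "p = (xi, c)" and xi: "xi \<in> ?AB" and c: "c \<in> {1..q}" "c \<noteq> xi y i"
      by blast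
    have "xi x i \<in> {1..q}" using xi xyz configs_val i by auto
    moreover have "xi y i \<noteq> xi x i" using xi by (auto simp: Omega_def)
    ultimately have "same_pattern N F q i xi (recolour_above i y (xi x i) c xi)"
      using xi c i by (intro recolour_above_same_pattern) auto
    thus "L (?recolour p) = (case p of (xi, c) \<Rightarrow> L xi)" by (simp add: L p)
  qed
  also have "\<dots> = (\<Sum>xi\<in>?AB. \<Sum>c\<in>{1..q} - {xi y i}. L xi)"
    by (subst sum.Sigma) (auto simp: configs_finite)
  also have "\<dots> = (\<Sum>xi\<in>?AB. (real q - 1) * L xi)"
  proof (intro sum.cong refl)
    fix xi assume "xi \<in> ?AB"
    hence "xi y i \<in> {1..q}" using xyz configs_val i by auto
    thus "(\<Sum>c\<in>{1..q} - {xi y i}. L xi) = (real q - 1) * L xi" by (simp add: of_nat_diff)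
  qed
  also have "?AB = configs N F q \<inter> (Omega i x z \<inter> - (Omega i x y \<union> Omega i y z))" by blast
  finally show ?thesis by (simp add: sum_distrib_left)
qed

theorem lemma9:
  fixes N F q x y z i :: nat and t :: real
  assumes "q \<ge> 2" and "t \<ge> 0"
    and "x < y" and "y < z" and "z \<le> N"
    and "1 \<le> i" and "i \<le> F"
  shows "cond_prob_at N F q t (Omega i x z) (- (Omega i x y \<union> Omega i y z))
           = 1 / (real q - 1)"
proof -
  let ?B = "- (Omega i x y \<union> Omega i y z)"
  have i: "i \<in> {1..F}" using assms(6,7) by simp
  have count: "prob_at N F q t ?B = (real q - 1) * prob_at N F q t (Omega i x z \<inter> ?B)"
    unfolding prob_at_def by (rule pattern_invariant_count[OF law_at_invariant assms(3-5) i])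
  define xi0 :: config where
    "xi0 = (\<lambda>v j. if v \<le> N \<and> 1 \<le> j \<and> j \<le> F then (if v = y \<and> j = i then 2 else 1) else 0)"
  have "xi0 \<in> configs N F q \<inter> ?B" using assms by (auto simp: xi0_def configs_def Omega_def)
  hence "0 < prob_at N F q t ?B"
    unfolding prob_at_def using law_at_pos assms(2) configs_finite by (intro sum_pos) auto
  thus ?thesis using count assms(1) by (auto simp: cond_prob_at_def field_simps)
qed

end
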